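(* Let $G$ be a group and $R$ a retract of $G$. Suppose $G$ is weakly hyperbolic relative to a collection of subgroups $\mathcal A=\{A_1,\ldots,A_m\}$ with $A_i\le R$ for all $i=1,\ldots,m$. Then $R$ is weakly hyperbolic relative to $\mathcal A$.
   Context: $R\le G$ is a retract if there is a homomorphism $G\to R$ restricting to the identity on $R$. For a group $G$ and a collection $\mathcal H=\{H_1,\ldots,H_m\}$ of subgroups, $X\subset G$ is a relative generating set if $G$ is generated by $X\cup H_1\cup\cdots\cup H_m$; the relative Cayley graph is the Cayley graph of $G$ with respect to $X\cup H_1\cup\cdots\cup H_m$ with combinatorial metric; $G$ is weakly hyperbolic relative to $\mathcal H$ if for some finite relative generating set $X$ this relative Cayley graph is hyperbolic. *)

theory Defs
  imports "HOL-Algebra.Algebra"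
begin

definition word_dist :: "('a, 'b) monoid_scheme \<Rightarrow> 'a set \<Rightarrow> 'a \<Rightarrow> 'a \<Rightarrow> nat" where
  "word_dist G S g h = (LEAST n. \<exists>ws. length ws = n \<and>
      set ws \<subseteq> S \<union> (\<lambda>s. inv\<^bsub>G\<^esub> s) ` S \<and>
      foldr (\<lambda>x y. x \<otimes>\<^bsub>G\<^esub> y) ws \<one>\<^bsub>G\<^esub> = inv\<^bsub>G\<^esub> g \<otimes>\<^bsub>G\<^esub> h)"

definition gromov_prod :: "('a \<Rightarrow> 'a \<Rightarrow> real) \<Rightarrow> 'a \<Rightarrow> 'a \<Rightarrow> 'a \<Rightarrow> real" where
  "gromov_prod d w x y = (d x w + d y w - d x y) / 2"

definition gromov_hyperbolic_on :: "'a set \<Rightarrow> ('a \<Rightarrow> 'a \<Rightarrow> real) \<Rightarrow> bool" where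
  "gromov_hyperbolic_on V d \<longleftrightarrow> (\<exists>\<delta>\<ge>0. \<forall>x\<in>V. \<forall>y\<in>V. \<forall>z\<in>V. \<forall>w\<in>V.
      gromov_prod d w x z \<ge> min (gromov_prod d w x y) (gromov_prod d w y z) - \<delta>)"

definition weakly_rel_hyperbolic :: "('a, 'b) monoid_scheme \<Rightarrow> 'a set list \<Rightarrow> bool" where
  "weakly_rel_hyperbolic G Hs \<longleftrightarrow> (\<forall>H\<in>set Hs. subgroup H G) \<and>
     (\<exists>S0. finite S0 \<and> S0 \<subseteq> carrier G \<and>
        generate G (S0 \<union> \<Union>(set Hs)) = carrier G \<and>
        gromov_hyperbolic_on (carrier G)
          (\<lambda>g h. real (word_dist G (S0 \<union> \<Union>(set Hs)) g h)))"

definition retract :: "'a set \<Rightarrow> ('a, 'b) monoid_scheme \<Rightarrow> bool" where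
  "retract R G \<longleftrightarrow> subgroup R G \<and>
     (\<exists>r \<in> hom G (G\<lparr>carrier := R\<rparr>). \<forall>x\<in>R. r x = x)"

end

(* A retraction r : G -> R maps words over S = S0 \<union> \<Union>A to words over r(S) = r(S0) \<union> \<Union>A, so on R the
   word metric of R with respect to r(S) is bounded by the word metric of G with respect to S; conversely
   every letter of r(S) has bounded S-length.  Hence the Cayley graph of R sits bi-Lipschitz in the
   Cayley graph of G.  By the Morse lemma, geodesics of R then stay uniformly close to geodesics of G
   with the same endpoints, so slim triangles in G give slim triangles in R.  Hyperbolicity in the
   sense of the four-point condition is translated to slim triangles and back, which is possible
   because Cayley graphs are geodesic. *)

theory Submission
  imports Defs "HOL-Real_Asymp.Real_Asymp"
begin

lemma exp_dominates_linear: "\<exists>K. \<forall>k::nat. 2 ^ k \<le> a + b * k \<longrightarrow> k \<le> K"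
proof -
  have "eventually (\<lambda>k. real a + real b * real k < 2 ^ k) at_top" by real_asymp
  then obtain K where K: "\<And>k. k \<ge> K \<Longrightarrow> real a + real b * real k < 2 ^ k"
    unfolding eventually_at_top_linorder by blast
  have "k \<le> K" if "2 ^ k \<le> a + b * k" for k
  proof (rule ccontr)
    assume "\<not> k \<le> K"
    then have "real a + real b * real k < 2 ^ k" using K by simp
    moreover have "real (2 ^ k) \<le> real (a + b * k)" using that by (simp only: of_nat_le_iff)
    ultimately show False by simp
  qed
  then show ?thesis by blast
qed

lemma bounded_if_le_linear_in_log:
  "\<exists>M. \<forall>x::nat. (\<forall>k. 6 * x \<le> 2 ^ k \<longrightarrow> x \<le> a + b * k) \<longrightarrow> x \<le> M"
proof -
  obtain K where K: "\<And>k. 2 ^ k \<le> 12 * a + 12 * b * k \<Longrightarrow> k \<le> K"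
    using exp_dominates_linear by blast
  have "x \<le> a + b * K" if x: "\<forall>k. 6 * x \<le> 2 ^ k \<longrightarrow> x \<le> a + b * k" for x
  proof (cases "x = 0")
    case False
    have "\<exists>k. 6 * x \<le> 2 ^ k" by (intro exI[of _ "6 * x"]) (simp add: less_imp_le)
    define k where "k = (LEAST k. 6 * x \<le> 2 ^ k)"
    have k: "6 * x \<le> 2 ^ k" unfolding k_def by (rule LeastI_ex) fact
    have xk: "x \<le> a + b * k" using x k by blast
    have "k \<noteq> 0"
    proof
      assume "k = 0"
      then have "6 * x \<le> 1" using k by simp
      then show False using False by simp
    qed
    then obtain j where j: "k = Suc j" using not0_implies_Suc by blast
    then have "\<not> 6 * x \<le> 2 ^ j" using not_less_Least[of j "\<lambda>k. 6 * x \<le> 2 ^ k"] k_def by simp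
    then have "2 ^ k < 12 * x" using j by simp
    also have "12 * x \<le> 12 * a + 12 * b * k" using xk by simp
    finally have "k \<le> K" using K by simp
    then have "b * k \<le> b * K" by simp
    then show ?thesis using xk by linarith
  qed simp
  then show ?thesis by blast
qed

section \<open>Geodesic spaces with integer distances\<close>

definition geodesic :: "'a set \<Rightarrow> ('a \<Rightarrow> 'a \<Rightarrow> nat) \<Rightarrow> (nat \<Rightarrow> 'a) \<Rightarrow> 'a \<Rightarrow> 'a \<Rightarrow> bool" where
  "geodesic V d \<gamma> x y \<longleftrightarrow> \<gamma> 0 = x \<and> \<gamma> (d x y) = y \<and> (\<forall>i\<le>d x y. \<gamma> i \<in> V) \<and>
     (\<forall>i j. i \<le> j \<longrightarrow> j \<le> d x y \<longrightarrow> d (\<gamma> i) (\<gamma> j) = j - i)"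

locale nat_geodesic_space =
  fixes V :: "'a set" and d :: "'a \<Rightarrow> 'a \<Rightarrow> nat"
  assumes dist_self: "x \<in> V \<Longrightarrow> d x x = 0"
    and dist_commute: "x \<in> V \<Longrightarrow> y \<in> V \<Longrightarrow> d x y = d y x"
    and dist_triangle: "x \<in> V \<Longrightarrow> y \<in> V \<Longrightarrow> z \<in> V \<Longrightarrow> d x z \<le> d x y + d y z"
    and geodesic_exists: "x \<in> V \<Longrightarrow> y \<in> V \<Longrightarrow> \<exists>\<gamma>. geodesic V d \<gamma> x y"
begin

text \<open>Twice the Gromov product of \<open>x\<close> and \<open>y\<close> at \<open>w\<close>, which is an integer.\<close>
definition gromov_prod2 :: "'a \<Rightarrow> 'a \<Rightarrow> 'a \<Rightarrow> int" where
  "gromov_prod2 x y w = int (d x w) + int (d y w) - int (d x y)"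

definition four_point :: "nat \<Rightarrow> bool" where
  "four_point K \<longleftrightarrow> (\<forall>x\<in>V. \<forall>y\<in>V. \<forall>z\<in>V. \<forall>w\<in>V.
     gromov_prod2 x z w \<ge> min (gromov_prod2 x y w) (gromov_prod2 y z w) - int K)"

definition slim_triangles :: "nat \<Rightarrow> bool" where
  "slim_triangles D \<longleftrightarrow> (\<forall>a\<in>V. \<forall>b\<in>V. \<forall>c\<in>V. \<forall>\<alpha> \<beta> \<gamma>.
     geodesic V d \<alpha> a b \<longrightarrow> geodesic V d \<beta> a c \<longrightarrow> geodesic V d \<gamma> c b \<longrightarrow>
     (\<forall>i\<le>d a b. (\<exists>j\<le>d a c. d (\<alpha> i) (\<beta> j) \<le> D) \<or> (\<exists>j\<le>d c b. d (\<alpha> i) (\<gamma> j) \<le> D)))"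

lemma slim_trianglesD:
  assumes "slim_triangles D" "geodesic V d \<alpha> a b" "geodesic V d \<beta> a c" "geodesic V d \<gamma> c b"
    "a \<in> V" "b \<in> V" "c \<in> V" "i \<le> d a b"
  shows "(\<exists>j\<le>d a c. d (\<alpha> i) (\<beta> j) \<le> D) \<or> (\<exists>j\<le>d c b. d (\<alpha> i) (\<gamma> j) \<le> D)"
  using assms unfolding slim_triangles_def by blast

lemma geodesic_mem: "geodesic V d \<gamma> x y \<Longrightarrow> i \<le> d x y \<Longrightarrow> \<gamma> i \<in> V"
  by (simp add: geodesic_def)

lemma geodesic_ends: "geodesic V d \<gamma> x y \<Longrightarrow> \<gamma> 0 = x" "geodesic V d \<gamma> x y \<Longrightarrow> \<gamma> (d x y) = y"
  by (simp_all add: geodesic_def)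

lemma geodesic_dist: "geodesic V d \<gamma> x y \<Longrightarrow> i \<le> j \<Longrightarrow> j \<le> d x y \<Longrightarrow> d (\<gamma> i) (\<gamma> j) = j - i"
  by (simp add: geodesic_def)

lemma geodesic_endpoints_mem: "geodesic V d \<gamma> x y \<Longrightarrow> x \<in> V" "geodesic V d \<gamma> x y \<Longrightarrow> y \<in> V"
  by (metis geodesic_def le0) (metis geodesic_def order_refl)

lemma geodesic_dist_start:
  assumes "geodesic V d \<gamma> x y" "i \<le> d x y"
  shows "d x (\<gamma> i) = i" "d (\<gamma> i) x = i"
proof -
  show "d x (\<gamma> i) = i" using geodesic_dist[OF assms(1), of 0 i] assms by (simp add: geodesic_def)
  then show "d (\<gamma> i) x = i" using dist_commute geodesic_mem geodesic_endpoints_mem assms by metis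
qed

lemma geodesic_dist_end:
  assumes "geodesic V d \<gamma> x y" "i \<le> d x y"
  shows "d (\<gamma> i) y = d x y - i" "d y (\<gamma> i) = d x y - i"
proof -
  show "d (\<gamma> i) y = d x y - i" using geodesic_dist[OF assms(1), of i "d x y"] assms
    by (simp add: geodesic_def)
  then show "d y (\<gamma> i) = d x y - i" using dist_commute geodesic_mem geodesic_endpoints_mem assms by metis
qed

lemma geodesic_subpath:
  assumes "geodesic V d \<gamma> x y" "s \<le> t" "t \<le> d x y"
  shows "geodesic V d (\<lambda>i. \<gamma> (s + i)) (\<gamma> s) (\<gamma> t)"
  using assms unfolding geodesic_def by auto

section \<open>Four-point condition versus slim triangles\<close>

text \<open>The point of \<open>\<beta>\<close> at distance about \<open>(d x z + d x p - d p z) / 2\<close> from \<open>x\<close> is the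
  candidate; the four-point condition applied to \<open>x, p, z\<close> seen from it bounds its distance to \<open>p\<close>.\<close>
lemma four_point_gromov_prod2_small_imp_near_geodesic:
  assumes K: "four_point K" and \<beta>: "geodesic V d \<beta> x z" and p: "p \<in> V"
    and small: "gromov_prod2 x z p \<le> int K"
  shows "\<exists>j\<le>d x z. d p (\<beta> j) \<le> 2*K+1"
proof -
  have xV: "x \<in> V" and zV: "z \<in> V" using \<beta> geodesic_endpoints_mem by auto
  define n where "n = d x z"
  define c where "c = int (d p z) - int (d x p)"
  have tri: "d x p \<le> d x z + d z p" "d p z \<le> d p x + d x z" using dist_triangle xV zV p by auto
  have sym: "d z p = d p z" "d p x = d x p" using dist_commute xV zV p by auto
  define j where "j = nat ((int n - c) div 2)"
  have j: "j \<le> n" "int j * 2 = int n - c \<or> int j * 2 = int n - c - 1"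
    using tri sym unfolding j_def n_def c_def by auto
  define q where "q = \<beta> j"
  have qV: "q \<in> V" using geodesic_mem \<beta> j n_def q_def by auto
  have dq: "d x q = j" "d q z = n - j"
    using geodesic_dist_start[OF \<beta>] geodesic_dist_end[OF \<beta>] j n_def q_def by auto
  have sym': "d q x = d x q" "d z q = d q z" "d p q = d q p" using dist_commute xV zV qV p by auto
  have "gromov_prod2 x z q \<ge> min (gromov_prod2 x p q) (gromov_prod2 p z q) - int K"
    using K xV zV p qV unfolding four_point_def by blast
  then have "min (gromov_prod2 x p q) (gromov_prod2 p z q) \<le> int K"
    using dq sym' j unfolding gromov_prod2_def n_def by auto
  moreover have "gromov_prod2 x p q \<ge> 0" "gromov_prod2 p z q \<ge> 0"
    unfolding gromov_prod2_def using dist_triangle[OF xV qV p] dist_triangle[OF p qV zV] sym' by auto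
  ultimately have "2 * int (d p q) \<le> 3 * int K + 1"
    using small dq sym' sym j unfolding gromov_prod2_def c_def n_def by auto
  then show ?thesis using j n_def q_def by (intro exI[of _ j]) auto
qed

lemma four_point_imp_slim_triangles:
  assumes K: "four_point K" shows "slim_triangles (2*K+1)"
  unfolding slim_triangles_def
proof (intro ballI allI impI)
  fix a b c \<alpha> \<beta> \<gamma> i
  assume V: "a \<in> V" "b \<in> V" "c \<in> V" and \<alpha>: "geodesic V d \<alpha> a b"
    and \<beta>: "geodesic V d \<beta> a c" and \<gamma>: "geodesic V d \<gamma> c b" and i: "i \<le> d a b"
  have pV: "\<alpha> i \<in> V" using geodesic_mem \<alpha> i by auto
  have "gromov_prod2 a b (\<alpha> i) = 0"
    using geodesic_dist_start[OF \<alpha> i] geodesic_dist_end[OF \<alpha> i] i unfolding gromov_prod2_def by auto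
  moreover have "gromov_prod2 a b (\<alpha> i) \<ge> min (gromov_prod2 a c (\<alpha> i)) (gromov_prod2 c b (\<alpha> i)) - int K"
    using K V pV unfolding four_point_def by blast
  ultimately have "gromov_prod2 a c (\<alpha> i) \<le> int K \<or> gromov_prod2 c b (\<alpha> i) \<le> int K" by linarith
  then show "(\<exists>j\<le>d a c. d (\<alpha> i) (\<beta> j) \<le> 2*K+1) \<or> (\<exists>j\<le>d c b. d (\<alpha> i) (\<gamma> j) \<le> 2*K+1)"
    using four_point_gromov_prod2_small_imp_near_geodesic[OF K _ pV] \<beta> \<gamma> by blast
qed

lemma gromov_prod2_le_dist_geodesic:
  assumes \<gamma>: "geodesic V d \<gamma> x y" and t: "t \<le> d x y" and w: "w \<in> V"
  shows "gromov_prod2 x y w \<le> 2 * int (d w (\<gamma> t))"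
proof -
  have V: "x \<in> V" "y \<in> V" "\<gamma> t \<in> V" using \<gamma> geodesic_endpoints_mem geodesic_mem t by auto
  have "d x w \<le> d x (\<gamma> t) + d (\<gamma> t) w" "d y w \<le> d y (\<gamma> t) + d (\<gamma> t) w"
    using dist_triangle V w by auto
  moreover have "d x (\<gamma> t) = t" "d y (\<gamma> t) = d x y - t" "d (\<gamma> t) w = d w (\<gamma> t)"
    using geodesic_dist_start[OF \<gamma> t] geodesic_dist_end[OF \<gamma> t] dist_commute V w by auto
  ultimately show ?thesis unfolding gromov_prod2_def using t by auto
qed

text \<open>Take the last point \<open>\<gamma> t\<close> of \<open>\<gamma>\<close> that is \<open>D\<close>-close to a geodesic from \<open>x\<close> to \<open>w\<close>;
  by slimness \<open>\<gamma> t\<close> is \<open>(D+1)\<close>-close to a geodesic from \<open>w\<close> to \<open>z\<close> as well.\<close>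
lemma slim_triangles_geodesic_point_near:
  assumes D: "slim_triangles D" and \<gamma>: "geodesic V d \<gamma> x z" and w: "w \<in> V"
  shows "\<exists>t\<le>d x z. 2 * int (d w (\<gamma> t)) \<le> gromov_prod2 x z w + 4 * (int D + 1)"
proof -
  have xV: "x \<in> V" and zV: "z \<in> V" using \<gamma> geodesic_endpoints_mem by auto
  obtain \<beta> where \<beta>: "geodesic V d \<beta> x w" using geodesic_exists xV w by blast
  obtain \<beta>' where \<beta>': "geodesic V d \<beta>' w z" using geodesic_exists zV w by blast
  define A where "A = {t. t \<le> d x z \<and> (\<exists>j\<le>d x w. d (\<gamma> t) (\<beta> j) \<le> D)}"
  have "0 \<in> A" unfolding A_def using geodesic_ends[OF \<gamma>] geodesic_ends[OF \<beta>] dist_self xV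
    by (intro CollectI conjI exI[of _ 0]) auto
  moreover have "finite A" unfolding A_def by auto
  ultimately have tA: "Max A \<in> A" and tmax: "\<And>u. u \<in> A \<Longrightarrow> u \<le> Max A"
    using Max_in by auto
  define t where "t = Max A"
  obtain j1 where j1: "j1 \<le> d x w" "d (\<gamma> t) (\<beta> j1) \<le> D" and t: "t \<le> d x z"
    using tA unfolding A_def t_def by blast
  have "\<exists>j2\<le>d w z. d (\<gamma> t) (\<beta>' j2) \<le> D + 1"
  proof (cases "t = d x z")
    case True
    then show ?thesis using geodesic_ends[OF \<gamma>] geodesic_ends[OF \<beta>'] dist_self zV
      by (intro exI[of _ "d w z"]) auto
  next
    case False
    then have t1: "Suc t \<le> d x z" using t by auto
    have "Suc t \<notin> A" using tmax t_def by fastforce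
    then obtain j2 where j2: "j2 \<le> d w z" "d (\<gamma> (Suc t)) (\<beta>' j2) \<le> D"
      using slim_trianglesD[OF D \<gamma> \<beta> \<beta>' xV zV w t1] t1 unfolding A_def by blast
    have "d (\<gamma> t) (\<beta>' j2) \<le> d (\<gamma> t) (\<gamma> (Suc t)) + d (\<gamma> (Suc t)) (\<beta>' j2)"
      using dist_triangle geodesic_mem \<gamma> \<beta>' t1 j2 by (meson Suc_leD)
    moreover have "d (\<gamma> t) (\<gamma> (Suc t)) = 1" using geodesic_dist[OF \<gamma> _ t1, of t] by simp
    ultimately show ?thesis using j2 by (intro exI[of _ j2]) auto
  qed
  then obtain j2 where j2: "j2 \<le> d w z" "d (\<gamma> t) (\<beta>' j2) \<le> D + 1" by blast
  define q u v where "q = \<gamma> t" "u = \<beta> j1" "v = \<beta>' j2"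
  have V: "q \<in> V" "u \<in> V" "v \<in> V" using geodesic_mem \<gamma> \<beta> \<beta>' t j1 j2 q_u_v_def by auto
  have e1: "d x u = j1" "d u w = d x w - j1"
    using geodesic_dist_start[OF \<beta> j1(1)] geodesic_dist_end[OF \<beta> j1(1)] q_u_v_def by auto
  have e2: "d w v = j2" "d v z = d w z - j2"
    using geodesic_dist_start[OF \<beta>' j2(1)] geodesic_dist_end[OF \<beta>' j2(1)] q_u_v_def by auto
  have e3: "d x q = t" "d q z = d x z - t"
    using geodesic_dist_start[OF \<gamma> t] geodesic_dist_end[OF \<gamma> t] q_u_v_def by auto
  have tri: "d x q \<le> d x u + d u q" "d q w \<le> d q u + d u w" "d z q \<le> d z v + d v q" "d q w \<le> d q v + d v w"
    using dist_triangle V xV zV w by auto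
  have sym: "d u q = d q u" "d v q = d q v" "d v w = d w v" "d z v = d v z" "d z q = d q z"
    "d w q = d q w" "d z w = d w z"
    using dist_commute V xV zV w by auto
  have "2 * int (d w q) \<le> gromov_prod2 x z w + 4 * (int D + 1)"
    using e1 e2 e3 tri sym j1 j2 t q_u_v_def unfolding gromov_prod2_def by auto
  then show ?thesis using t q_u_v_def by auto
qed

lemma slim_triangles_imp_four_point:
  assumes D: "slim_triangles D" shows "four_point (6*D+4)"
  unfolding four_point_def
proof (intro ballI)
  fix x y z w assume V: "x \<in> V" "y \<in> V" "z \<in> V" "w \<in> V"
  obtain \<gamma> where \<gamma>: "geodesic V d \<gamma> x z" using geodesic_exists V by blast
  obtain \<alpha> where \<alpha>: "geodesic V d \<alpha> x y" using geodesic_exists V by blast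
  obtain \<beta> where \<beta>: "geodesic V d \<beta> y z" using geodesic_exists V by blast
  obtain t where t: "t \<le> d x z" "2 * int (d w (\<gamma> t)) \<le> gromov_prod2 x z w + 4 * (int D + 1)"
    using slim_triangles_geodesic_point_near[OF D \<gamma> V(4)] by blast
  have qV: "\<gamma> t \<in> V" using geodesic_mem \<gamma> t by auto
  have close: "gromov_prod2 a b w \<le> gromov_prod2 x z w + 6 * int D + 4"
    if \<rho>: "geodesic V d \<rho> a b" and j: "j \<le> d a b" "d (\<gamma> t) (\<rho> j) \<le> D" for a b \<rho> j
  proof -
    have "d w (\<rho> j) \<le> d w (\<gamma> t) + d (\<gamma> t) (\<rho> j)"
      using dist_triangle V qV geodesic_mem \<rho> j by auto
    then have "int (d w (\<rho> j)) \<le> int (d w (\<gamma> t)) + int D" using j by linarith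
    moreover have "gromov_prod2 a b w \<le> 2 * int (d w (\<rho> j))" by (rule gromov_prod2_le_dist_geodesic[OF \<rho> j(1) V(4)])
    ultimately show ?thesis using t(2) by (smt (verit))
  qed
  show "min (gromov_prod2 x y w) (gromov_prod2 y z w) - int (6*D+4) \<le> gromov_prod2 x z w"
    using slim_trianglesD[OF D \<gamma> \<alpha> \<beta> V(1,3,2) t(1)] close[OF \<alpha>] close[OF \<beta>] by fastforce
qed

section \<open>Quasi-geodesics and the Morse lemma\<close>

definition coarse_path :: "nat \<Rightarrow> (nat \<Rightarrow> 'a) \<Rightarrow> nat \<Rightarrow> bool" where
  "coarse_path C p n \<longleftrightarrow> (\<forall>i\<le>n. p i \<in> V) \<and> (\<forall>i<n. d (p i) (p (Suc i)) \<le> C)"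

definition quasi_geodesic :: "nat \<Rightarrow> (nat \<Rightarrow> 'a) \<Rightarrow> nat \<Rightarrow> bool" where
  "quasi_geodesic C c n \<longleftrightarrow> coarse_path C c n \<and> (\<forall>i j. i \<le> j \<longrightarrow> j \<le> n \<longrightarrow> j - i \<le> d (c i) (c j))"

lemma coarse_path_mem: "coarse_path C p n \<Longrightarrow> i \<le> n \<Longrightarrow> p i \<in> V"
  by (simp add: coarse_path_def)

lemma coarse_path_step: "coarse_path C p n \<Longrightarrow> i < n \<Longrightarrow> d (p i) (p (Suc i)) \<le> C"
  by (simp add: coarse_path_def)

lemma coarse_path_prefix: "coarse_path C p n \<Longrightarrow> m \<le> n \<Longrightarrow> coarse_path C p m"
  by (simp add: coarse_path_def)

lemma coarse_path_shift: "coarse_path C p n \<Longrightarrow> m \<le> n \<Longrightarrow> coarse_path C (\<lambda>i. p (m + i)) (n - m)"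
  by (simp add: coarse_path_def)

lemma coarse_path_reverse:
  assumes p: "coarse_path C p n" shows "coarse_path C (\<lambda>i. p (n - i)) n"
  unfolding coarse_path_def
proof (intro conjI allI impI)
  fix i assume i: "i < n"
  then have "d (p (n - Suc i)) (p (n - i)) \<le> C"
    using coarse_path_step[OF p, of "n - Suc i"] by (simp add: Suc_diff_Suc)
  then show "d (p (n - i)) (p (n - Suc i)) \<le> C"
    using dist_commute coarse_path_mem[OF p] by (metis diff_le_self)
qed (use coarse_path_mem[OF p] in auto)

lemma coarse_path_dist_le:
  assumes p: "coarse_path C p n" and "i \<le> j" "j \<le> n"
  shows "d (p i) (p j) \<le> C * (j - i)"
  using assms(2,3)
proof (induction j rule: dec_induct)
  case base
  then show ?case using dist_self coarse_path_mem[OF p] by simp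
next
  case (step j)
  have "d (p i) (p (Suc j)) \<le> d (p i) (p j) + d (p j) (p (Suc j))"
    using dist_triangle coarse_path_mem[OF p] step by simp
  also have "\<dots> \<le> C * (j - i) + C" using step coarse_path_step[OF p, of j] by simp
  also have "\<dots> = C * (Suc j - i)" using step by (simp add: Suc_diff_le)
  finally show ?case .
qed

lemma quasi_geodesic_dist_ge:
  assumes c: "quasi_geodesic C c n" and "i \<le> n" "j \<le> n"
  shows "(j - i) + (i - j) \<le> d (c i) (c j)"
proof (cases "i \<le> j")
  case False
  then have "i - j \<le> d (c j) (c i)" using c assms unfolding quasi_geodesic_def by auto
  moreover have "d (c j) (c i) = d (c i) (c j)"
    using dist_commute coarse_path_mem c assms unfolding quasi_geodesic_def by blast
  ultimately show ?thesis using False by simp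
qed (use c assms in \<open>auto simp: quasi_geodesic_def\<close>)

text \<open>Bisection: split the path at its midpoint and use one slim triangle per halving.\<close>
lemma slim_triangles_geodesic_near_coarse_path:
  assumes D: "slim_triangles D"
  shows "coarse_path C p L \<Longrightarrow> geodesic V d \<sigma> (p 0) (p L) \<Longrightarrow> L \<le> 2 ^ k \<Longrightarrow>
    t \<le> d (p 0) (p L) \<Longrightarrow> \<exists>i\<le>L. d (\<sigma> t) (p i) \<le> D * k + C"
proof (induction k arbitrary: p L \<sigma> t)
  have short: "\<exists>i\<le>L. d (\<sigma> t) (p i) \<le> C"
    if p: "coarse_path C p L" and \<sigma>: "geodesic V d \<sigma> (p 0) (p L)" and "L \<le> 1"
      and t: "t \<le> d (p 0) (p L)" for p L \<sigma> t
  proof -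
    have "d (p 0) (p L) \<le> C * L" using coarse_path_dist_le[OF p, of 0 L] by simp
    also have "\<dots> \<le> C" using mult_le_mono2[OF \<open>L \<le> 1\<close>, of C] by simp
    finally have "d (p 0) (p L) \<le> C" .
    then show ?thesis using geodesic_dist_start[OF \<sigma> t] t by (intro exI[of _ 0]) auto
  qed
  {
    case 0
    then show ?case using short by fastforce
  next
    case (Suc k)
    show ?case
    proof (cases "L \<le> 1")
      case True
      then show ?thesis using short Suc.prems by fastforce
    next
      case False
      define m where "m = L div 2"
      have m: "m \<le> L" "m \<le> 2 ^ k" "L - m \<le> 2 ^ k" using Suc.prems(3) False unfolding m_def by auto
      have V: "p 0 \<in> V" "p L \<in> V" "p m \<in> V" using coarse_path_mem[OF Suc.prems(1)] m by auto
      obtain \<beta> where \<beta>: "geodesic V d \<beta> (p 0) (p m)" using geodesic_exists V by blast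
      obtain \<gamma> where \<gamma>: "geodesic V d \<gamma> (p m) (p L)" using geodesic_exists V by blast
      have near_half: "\<exists>i\<le>L. d (\<sigma> t) (p i) \<le> D * Suc k + C"
        if \<rho>: "geodesic V d \<rho> x y" and j: "j \<le> d x y" "d (\<sigma> t) (\<rho> j) \<le> D"
          and ih: "\<exists>i\<le>L. d (\<rho> j) (p i) \<le> D * k + C" for x y \<rho> j
      proof -
        obtain i where i: "i \<le> L" "d (\<rho> j) (p i) \<le> D * k + C" using ih by blast
        have "\<sigma> t \<in> V" "\<rho> j \<in> V" "p i \<in> V"
          using geodesic_mem[OF Suc.prems(2,4)] geodesic_mem[OF \<rho> j(1)]
            coarse_path_mem[OF Suc.prems(1) i(1)] by auto
        then have "d (\<sigma> t) (p i) \<le> d (\<sigma> t) (\<rho> j) + d (\<rho> j) (p i)"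
          by (rule dist_triangle)
        then show ?thesis using i j by (intro exI[of _ i]) auto
      qed
      have "(\<exists>j\<le>d (p 0) (p m). d (\<sigma> t) (\<beta> j) \<le> D) \<or> (\<exists>j\<le>d (p m) (p L). d (\<sigma> t) (\<gamma> j) \<le> D)"
        using slim_trianglesD[OF D Suc.prems(2) \<beta> \<gamma> V(1,2,3) Suc.prems(4)] .
      then show ?thesis
      proof (elim disjE exE conjE)
        fix j assume j: "j \<le> d (p 0) (p m)" "d (\<sigma> t) (\<beta> j) \<le> D"
        have "\<exists>i\<le>m. d (\<beta> j) (p i) \<le> D * k + C"
          using Suc.IH[OF coarse_path_prefix[OF Suc.prems(1) m(1)] \<beta> m(2) j(1)] .
        then show ?thesis using near_half[OF \<beta> j] m by (meson le_trans)
      next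
        fix j assume j: "j \<le> d (p m) (p L)" "d (\<sigma> t) (\<gamma> j) \<le> D"
        have "\<exists>i\<le>L - m. d (\<gamma> j) (p (m + i)) \<le> D * k + C"
          using Suc.IH[OF coarse_path_shift[OF Suc.prems(1) m(1)] _ m(3)] \<gamma> j m by simp
        then have "\<exists>i\<le>L. d (\<gamma> j) (p i) \<le> D * k + C"
          using m(1) by (metis le_diff_conv2 add.commute)
        then show ?thesis using near_half[OF \<gamma> j] by blast
      qed
    qed
  }
qed

lemma slim_triangles_geodesic_near_coarse_segment:
  assumes D: "slim_triangles D" and p: "coarse_path C p n" and i: "i1 \<le> n" "i2 \<le> n"
    and \<sigma>: "geodesic V d \<sigma> (p i1) (p i2)" and t: "t \<le> d (p i1) (p i2)"
    and k: "(i2 - i1) + (i1 - i2) \<le> 2 ^ k"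
  shows "\<exists>j\<le>n. d (\<sigma> t) (p j) \<le> D * k + C"
proof (cases "i1 \<le> i2")
  case True
  have "coarse_path C (\<lambda>j. p (i1 + j)) (i2 - i1)"
    using coarse_path_shift[OF coarse_path_prefix[OF p i(2)] True] .
  then obtain j where "j \<le> i2 - i1" "d (\<sigma> t) (p (i1 + j)) \<le> D * k + C"
    using slim_triangles_geodesic_near_coarse_path[OF D, of C "\<lambda>j. p (i1 + j)" "i2 - i1" \<sigma> k t]
      \<sigma> t k True by auto
  then show ?thesis using True i by (intro exI[of _ "i1 + j"]) auto
next
  case False
  have "coarse_path C (\<lambda>j. p (i1 - j)) (i1 - i2)"
    using coarse_path_prefix[OF coarse_path_reverse[OF coarse_path_prefix[OF p i(1)]]] by simp
  then obtain j where "j \<le> i1 - i2" "d (\<sigma> t) (p (i1 - j)) \<le> D * k + C"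
    using slim_triangles_geodesic_near_coarse_path[OF D, of C "\<lambda>j. p (i1 - j)" "i1 - i2" \<sigma> k t]
      \<sigma> t k False by auto
  then show ?thesis using i by (intro exI[of _ "i1 - j"]) auto
qed

lemma geodesic_dist_sum:
  assumes "geodesic V d \<gamma> x y" "i \<le> d x y"
  shows "d x (\<gamma> i) + d (\<gamma> i) y = d x y"
  using geodesic_dist_start[OF assms] geodesic_dist_end[OF assms] assms(2) by simp

lemma dist_le_of_near_short_segment:
  assumes V: "x \<in> V" "y \<in> V" "p \<in> V" "q \<in> V"
    and between: "d x y + d y p \<le> d x p" and qy: "d q y \<le> E"
    and short: "d x p \<le> D0" and far: "D0 \<le> d q p" and far': "2 * D0 \<le> d q x \<or> x = p"
  shows "D0 \<le> E"
proof -
  have "d q p \<le> d q y + d y p" "d q x \<le> d q y + d x y"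
    using dist_triangle[of q y p] dist_triangle[of q y x] dist_commute[of x y] V by auto
  then show ?thesis using between qy short far far' dist_self[OF V(1)] by auto
qed

lemma slim_triangles_quadrilateral:
  assumes D: "slim_triangles D" and \<sigma>: "geodesic V d \<sigma> x1 x2" and s: "s \<le> d x1 x2"
    and g1: "geodesic V d g1 x1 p1" and e: "geodesic V d e p1 p2" and g2: "geodesic V d g2 p2 x2"
  shows "(\<exists>j\<le>d x1 p1. d (\<sigma> s) (g1 j) \<le> 2 * D) \<or> (\<exists>j\<le>d p1 p2. d (\<sigma> s) (e j) \<le> 2 * D) \<or>
    (\<exists>j\<le>d p2 x2. d (\<sigma> s) (g2 j) \<le> 2 * D)"
proof -
  have V: "x1 \<in> V" "x2 \<in> V" "p1 \<in> V" "p2 \<in> V" "\<sigma> s \<in> V"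
    using geodesic_endpoints_mem[OF \<sigma>] geodesic_endpoints_mem[OF e] geodesic_mem[OF \<sigma> s] by auto
  obtain h where h: "geodesic V d h p1 x2" using geodesic_exists V by blast
  have "(\<exists>j\<le>d x1 p1. d (\<sigma> s) (g1 j) \<le> D) \<or> (\<exists>j\<le>d p1 x2. d (\<sigma> s) (h j) \<le> D)"
    using slim_trianglesD[OF D \<sigma> g1 h V(1-3) s] .
  moreover have "(\<exists>j'\<le>d p1 p2. d (\<sigma> s) (e j') \<le> 2 * D) \<or> (\<exists>j'\<le>d p2 x2. d (\<sigma> s) (g2 j') \<le> 2 * D)"
    if j: "j \<le> d p1 x2" "d (\<sigma> s) (h j) \<le> D" for j
  proof -
    have hV: "h j \<in> V" using geodesic_mem[OF h j(1)] .
    have "d (\<sigma> s) y \<le> 2 * D" if "y \<in> V" "d (h j) y \<le> D" for y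
      using dist_triangle[OF V(5) hV that(1)] j(2) that(2) by simp
    then show ?thesis
      using slim_trianglesD[OF D h e g2 V(3,2,4) j(1)] geodesic_mem[OF e] geodesic_mem[OF g2] by meson
  qed
  ultimately show ?thesis by fastforce
qed

text \<open>Around the farthest point \<open>\<sigma> t0\<close> cut out the geodesic quadrilateral
  \<open>\<sigma> t1, c i1, c i2, \<sigma> t2\<close> with \<open>t0 - t1 = t2 - t0 = 2 D0\<close> (truncated at the ends of \<open>\<sigma>\<close>).
  The two short sides are too far from \<open>\<sigma> t0\<close>, and \<open>[c i1, c i2]\<close> spans at most \<open>6 D0\<close> steps
  of \<open>c\<close>, so bisection brings it within \<open>D k + C\<close> of \<open>c\<close>.\<close>
lemma quasi_geodesic_deviation_bound:
  assumes D: "slim_triangles D" and c: "quasi_geodesic C c n"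
    and \<sigma>: "geodesic V d \<sigma> (c 0) (c n)"
    and near: "\<forall>t\<le>d (c 0) (c n). \<exists>i\<le>n. d (\<sigma> t) (c i) \<le> D0"
    and t0: "t0 \<le> d (c 0) (c n)" and far: "\<forall>i\<le>n. D0 \<le> d (\<sigma> t0) (c i)"
    and k: "6 * D0 \<le> 2 ^ k"
  shows "D0 \<le> 2 * D + C + D * k"
proof -
  define N where "N = d (c 0) (c n)"
  have cp: "coarse_path C c n" using c unfolding quasi_geodesic_def by simp
  have cV: "\<And>i. i \<le> n \<Longrightarrow> c i \<in> V" using coarse_path_mem[OF cp] .
  have \<sigma>V: "\<And>t. t \<le> N \<Longrightarrow> \<sigma> t \<in> V" using geodesic_mem \<sigma> N_def by auto
  have \<sigma>_ends: "\<sigma> 0 = c 0" "\<sigma> N = c n" using geodesic_ends[OF \<sigma>] N_def by auto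
  have \<sigma>_dist: "\<And>a b. a \<le> b \<Longrightarrow> b \<le> N \<Longrightarrow> d (\<sigma> a) (\<sigma> b) = b - a"
    using geodesic_dist[OF \<sigma>] N_def by auto
  have anchor: "\<exists>i\<le>n. d (\<sigma> s) (c i) \<le> D0 \<and> (2 * D0 \<le> d (\<sigma> t0) (\<sigma> s) \<or> \<sigma> s = c i)"
    if s: "s \<le> N" "s = 0 \<or> s = N \<or> 2 * D0 \<le> d (\<sigma> t0) (\<sigma> s)" for s
  proof (cases "2 * D0 \<le> d (\<sigma> t0) (\<sigma> s)")
    case True
    then show ?thesis using near s(1) N_def by blast
  next
    case False
    then have "s = 0 \<or> s = N" using s(2) by blast
    then obtain i where "i \<le> n" "\<sigma> s = c i" using \<sigma>_ends by blast
    then show ?thesis using dist_self cV by (intro exI[of _ i]) auto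
  qed
  define t1 t2 where "t1 = t0 - 2 * D0" and "t2 = min (t0 + 2 * D0) N"
  have t12: "t1 \<le> t0" "t0 \<le> t2" "t2 \<le> N" "t2 - t1 \<le> 4 * D0"
    using t0 unfolding t1_def t2_def N_def by auto
  have "d (\<sigma> t0) (\<sigma> t1) = t0 - t1" "d (\<sigma> t0) (\<sigma> t2) = t2 - t0"
    using \<sigma>_dist t12 \<sigma>V dist_commute by (metis le_trans)+
  then have "t1 = 0 \<or> 2 * D0 \<le> d (\<sigma> t0) (\<sigma> t1)" "t2 = N \<or> 2 * D0 \<le> d (\<sigma> t0) (\<sigma> t2)"
    unfolding t1_def t2_def by auto
  moreover have "t1 \<le> N" using t12 by simp
  ultimately obtain i1 i2 where i1: "i1 \<le> n" "d (\<sigma> t1) (c i1) \<le> D0"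
      "2 * D0 \<le> d (\<sigma> t0) (\<sigma> t1) \<or> \<sigma> t1 = c i1"
    and i2: "i2 \<le> n" "d (\<sigma> t2) (c i2) \<le> D0" "2 * D0 \<le> d (\<sigma> t0) (\<sigma> t2) \<or> \<sigma> t2 = c i2"
    using anchor[of t1] anchor[of t2] t12(3) by blast
  define q x1 x2 p1 p2 where "q = \<sigma> t0" "x1 = \<sigma> t1" "x2 = \<sigma> t2" "p1 = c i1" "p2 = c i2"
  have V: "q \<in> V" "x1 \<in> V" "x2 \<in> V" "p1 \<in> V" "p2 \<in> V"
    using \<sigma>V cV t12 i1 i2 unfolding q_x1_x2_p1_p2_def by auto
  obtain g1 where g1: "geodesic V d g1 x1 p1" using geodesic_exists V by blast
  obtain e where e: "geodesic V d e p1 p2" using geodesic_exists V by blast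
  obtain g2 where g2: "geodesic V d g2 p2 x2" using geodesic_exists V by blast
  have \<sigma>': "geodesic V d (\<lambda>s. \<sigma> (t1 + s)) x1 x2" "t0 - t1 \<le> d x1 x2" "\<sigma> (t1 + (t0 - t1)) = q"
    using geodesic_subpath[OF \<sigma>, of t1 t2] \<sigma>_dist t12 N_def q_x1_x2_p1_p2_def by auto
  have "(\<exists>j\<le>d x1 p1. d q (g1 j) \<le> 2 * D) \<or> (\<exists>j\<le>d p1 p2. d q (e j) \<le> 2 * D) \<or>
      (\<exists>j\<le>d p2 x2. d q (g2 j) \<le> 2 * D)"
    using slim_triangles_quadrilateral[OF D \<sigma>'(1,2) g1 e g2] \<sigma>'(3) by simp
  then show ?thesis
  proof (elim disjE exE conjE)
    fix j assume j: "j \<le> d x1 p1" "d q (g1 j) \<le> 2 * D"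
    have "D0 \<le> 2 * D"
      using dist_le_of_near_short_segment[OF V(2) geodesic_mem[OF g1 j(1)] V(4,1) _ j(2)]
        geodesic_dist_sum[OF g1 j(1)] i1 far q_x1_x2_p1_p2_def by auto
    then show ?thesis by simp
  next
    fix j assume j: "j \<le> d p2 x2" "d q (g2 j) \<le> 2 * D"
    have gV: "g2 j \<in> V" using geodesic_mem[OF g2 j(1)] .
    have "d x2 (g2 j) + d (g2 j) p2 \<le> d x2 p2"
      using geodesic_dist_sum[OF g2 j(1)] dist_commute V gV by simp
    then have "D0 \<le> 2 * D"
      using dist_le_of_near_short_segment[OF V(3) gV V(5,1) _ j(2)] i2 far q_x1_x2_p1_p2_def by auto
    then show ?thesis by simp
  next
    fix j assume j: "j \<le> d p1 p2" "d q (e j) \<le> 2 * D"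
    have "(i2 - i1) + (i1 - i2) \<le> d p1 p2"
      using quasi_geodesic_dist_ge[OF c i1(1) i2(1)] q_x1_x2_p1_p2_def by simp
    also have "\<dots> \<le> d p1 x1 + d x1 x2 + d x2 p2"
      using dist_triangle[OF V(4,2,5)] dist_triangle[OF V(2,3,5)] by simp
    also have "\<dots> \<le> 6 * D0"
      using i1 i2 dist_commute[OF V(2,4)] \<sigma>_dist[of t1 t2] t12 q_x1_x2_p1_p2_def by simp
    finally have "(i2 - i1) + (i1 - i2) \<le> 2 ^ k" using k by simp
    moreover have "geodesic V d e (c i1) (c i2)" "j \<le> d (c i1) (c i2)"
      using e j(1) unfolding q_x1_x2_p1_p2_def by auto
    ultimately obtain m where m: "m \<le> n" "d (e j) (c m) \<le> D * k + C"
      using slim_triangles_geodesic_near_coarse_segment[OF D cp i1(1) i2(1)] by blast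
    have "D0 \<le> d q (c m)" using far m q_x1_x2_p1_p2_def by simp
    also have "\<dots> \<le> d q (e j) + d (e j) (c m)"
      using dist_triangle V(1) geodesic_mem[OF e j(1)] cV[OF m(1)] by blast
    finally show ?thesis using j m by simp
  qed
qed

lemma slim_triangles_geodesic_near_quasi_geodesic:
  assumes D: "slim_triangles D"
  obtains M where "\<And>c n \<sigma> t. quasi_geodesic C c n \<Longrightarrow> geodesic V d \<sigma> (c 0) (c n) \<Longrightarrow>
    t \<le> d (c 0) (c n) \<Longrightarrow> \<exists>i\<le>n. d (\<sigma> t) (c i) \<le> M"
proof -
  obtain M where M: "\<And>x. \<forall>k. 6 * x \<le> 2 ^ k \<longrightarrow> x \<le> 2 * D + C + D * k \<Longrightarrow> x \<le> M"
    using bounded_if_le_linear_in_log[of "2 * D + C" D] by (metis add.assoc)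
  have "\<exists>i\<le>n. d (\<sigma> t) (c i) \<le> M"
    if c: "quasi_geodesic C c n" and \<sigma>: "geodesic V d \<sigma> (c 0) (c n)" and t: "t \<le> d (c 0) (c n)"
    for c n \<sigma> t
  proof -
    define N where "N = d (c 0) (c n)"
    define dev where "dev s = Min ((\<lambda>i. d (\<sigma> s) (c i)) ` {..n})" for s
    have dev_le: "dev s \<le> d (\<sigma> s) (c i)" if "i \<le> n" for s i
      using that unfolding dev_def by simp
    have dev_attained: "\<exists>i\<le>n. d (\<sigma> s) (c i) = dev s" for s
    proof -
      have "dev s \<in> (\<lambda>i. d (\<sigma> s) (c i)) ` {..n}" unfolding dev_def by (intro Min_in) auto
      then show ?thesis by auto
    qed
    define D0 where "D0 = Max (dev ` {..N})"
    have "D0 \<in> dev ` {..N}" unfolding D0_def by (intro Max_in) auto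
    then obtain t0 where t0: "t0 \<le> N" "dev t0 = D0" by auto
    have near: "\<forall>s\<le>N. \<exists>i\<le>n. d (\<sigma> s) (c i) \<le> D0"
      using dev_attained unfolding D0_def by (metis Max_ge atMost_iff finite_atMost finite_imageI image_eqI)
    have far: "\<forall>i\<le>n. D0 \<le> d (\<sigma> t0) (c i)" using dev_le t0 by metis
    have "D0 \<le> M"
      using quasi_geodesic_deviation_bound[OF D c \<sigma>] near far t0 N_def by (intro M) simp
    then show ?thesis using near t N_def by (meson le_trans)
  qed
  then show thesis by (rule that)
qed

text \<open>Conversely, every point \<open>c k\<close> is close to \<open>\<sigma>\<close>: take the last \<open>t\<close> such that \<open>\<sigma> t\<close> is
  \<open>M\<close>-close to some \<open>c a\<close> with \<open>a \<le> k\<close>; then \<open>\<sigma> (t + 1)\<close> is \<open>M\<close>-close to some \<open>c b\<close> with \<open>b > k\<close>,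
  so \<open>b - a\<close> and hence \<open>k - a\<close> is at most \<open>2 M + 1\<close>.\<close>
lemma quasi_geodesic_near_geodesic:
  assumes c: "quasi_geodesic C c n" and \<sigma>: "geodesic V d \<sigma> (c 0) (c n)"
    and near: "\<forall>t\<le>d (c 0) (c n). \<exists>i\<le>n. d (\<sigma> t) (c i) \<le> M" and k: "k \<le> n"
  shows "\<exists>t\<le>d (c 0) (c n). d (c k) (\<sigma> t) \<le> C * (2 * M + 1) + M"
proof -
  define N where "N = d (c 0) (c n)"
  have cp: "coarse_path C c n" using c unfolding quasi_geodesic_def by simp
  have cV: "\<And>i. i \<le> n \<Longrightarrow> c i \<in> V" using coarse_path_mem[OF cp] .
  have \<sigma>V: "\<And>t. t \<le> N \<Longrightarrow> \<sigma> t \<in> V" using geodesic_mem \<sigma> N_def by auto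
  have \<sigma>_ends: "\<sigma> 0 = c 0" "\<sigma> N = c n" using geodesic_ends[OF \<sigma>] N_def by auto
  define A where "A = {t. t \<le> N \<and> (\<exists>i\<le>k. d (\<sigma> t) (c i) \<le> M)}"
  have "0 \<in> A" unfolding A_def using \<sigma>_ends dist_self cV by (intro CollectI conjI exI[of _ 0]) auto
  moreover have "finite A" unfolding A_def by auto
  ultimately have tA: "Max A \<in> A" and tmax: "\<And>u. u \<in> A \<Longrightarrow> u \<le> Max A"
    using Max_in by auto
  define t where "t = Max A"
  obtain a where a: "a \<le> k" "d (\<sigma> t) (c a) \<le> M" and tN: "t \<le> N"
    using tA unfolding A_def t_def by blast
  have V: "\<sigma> t \<in> V" "c a \<in> V" "c k \<in> V" using \<sigma>V tN cV a k by auto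
  have "\<exists>b\<ge>k. b \<le> n \<and> d (c a) (c b) \<le> 2 * M + 1"
  proof (cases "t = N")
    case True
    then show ?thesis using a \<sigma>_ends dist_commute V k by (intro exI[of _ n]) auto
  next
    case False
    then have t1: "Suc t \<le> N" using tN by auto
    obtain b where b: "b \<le> n" "d (\<sigma> (Suc t)) (c b) \<le> M" using near t1 N_def by blast
    have "Suc t \<notin> A" using tmax t_def by fastforce
    then have bk: "k < b" using t1 b unfolding A_def by (metis (mono_tags, lifting) CollectI not_less)
    have "d (c a) (c b) \<le> d (c a) (\<sigma> t) + d (\<sigma> t) (\<sigma> (Suc t)) + d (\<sigma> (Suc t)) (c b)"
      using dist_triangle[of "c a" "\<sigma> t" "c b"] dist_triangle[of "\<sigma> t" "\<sigma> (Suc t)" "c b"]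
        V \<sigma>V[OF t1] cV[OF b(1)] by simp
    moreover have "d (\<sigma> t) (\<sigma> (Suc t)) = 1" using geodesic_dist[OF \<sigma>, of t "Suc t"] t1 N_def by simp
    moreover have "d (c a) (\<sigma> t) = d (\<sigma> t) (c a)" using dist_commute V by simp
    ultimately show ?thesis using a b bk by (intro exI[of _ b]) auto
  qed
  then obtain b where b: "k \<le> b" "b \<le> n" "d (c a) (c b) \<le> 2 * M + 1" by blast
  have "k - a \<le> 2 * M + 1" using quasi_geodesic_dist_ge[OF c _ b(2), of a] a k b by auto
  then have "C * (k - a) \<le> C * (2 * M + 1)" by (rule mult_le_mono2)
  moreover have "d (c k) (c a) \<le> C * (k - a)"
    using coarse_path_dist_le[OF cp a(1) k] dist_commute V by simp
  moreover have "d (c k) (\<sigma> t) \<le> d (c k) (c a) + d (\<sigma> t) (c a)"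
    using dist_triangle[of "c k" "c a" "\<sigma> t"] dist_commute V by simp
  ultimately show ?thesis using a tN N_def by (intro exI[of _ t]) auto
qed

lemma gromov_prod_eq_gromov_prod2:
  "gromov_prod (\<lambda>x y. real (d x y)) w x y = real_of_int (gromov_prod2 x y w) / 2"
  unfolding gromov_prod_def gromov_prod2_def by simp

lemma gromov_hyperbolic_on_iff_four_point:
  "gromov_hyperbolic_on V (\<lambda>x y. real (d x y)) \<longleftrightarrow> (\<exists>K. four_point K)"
proof
  assume "gromov_hyperbolic_on V (\<lambda>x y. real (d x y))"
  then obtain \<delta> where \<delta>: "\<And>x y z w. x \<in> V \<Longrightarrow> y \<in> V \<Longrightarrow> z \<in> V \<Longrightarrow> w \<in> V \<Longrightarrow>
      real_of_int (gromov_prod2 x z w) / 2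
        \<ge> min (real_of_int (gromov_prod2 x y w) / 2) (real_of_int (gromov_prod2 y z w) / 2) - \<delta>"
    unfolding gromov_hyperbolic_on_def gromov_prod_eq_gromov_prod2 by blast
  define K where "K = nat \<lceil>2 * \<delta>\<rceil>"
  have "four_point K"
    unfolding four_point_def
  proof (intro ballI)
    fix x y z w assume "x \<in> V" "y \<in> V" "z \<in> V" "w \<in> V"
    then have "real_of_int (gromov_prod2 x z w)
        \<ge> real_of_int (min (gromov_prod2 x y w) (gromov_prod2 y z w)) - 2 * \<delta>"
      using \<delta>[of x y z w] by (simp add: min_def split: if_splits)
    moreover have "2 * \<delta> \<le> real K" unfolding K_def by linarith
    ultimately have "real_of_int (gromov_prod2 x z w) \<ge> real_of_int (min (gromov_prod2 x y w) (gromov_prod2 y z w) - int K)"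
      by simp
    then show "min (gromov_prod2 x y w) (gromov_prod2 y z w) - int K \<le> gromov_prod2 x z w" by linarith
  qed
  then show "\<exists>K. four_point K" ..
next
  assume "\<exists>K. four_point K"
  then obtain K where K: "four_point K" ..
  show "gromov_hyperbolic_on V (\<lambda>x y. real (d x y))"
    unfolding gromov_hyperbolic_on_def gromov_prod_eq_gromov_prod2
  proof (intro exI[of _ "real K / 2"] conjI ballI)
    fix x y z w assume "x \<in> V" "y \<in> V" "z \<in> V" "w \<in> V"
    then have "min (gromov_prod2 x y w) (gromov_prod2 y z w) - int K \<le> gromov_prod2 x z w"
      using K unfolding four_point_def by blast
    then have "real_of_int (min (gromov_prod2 x y w) (gromov_prod2 y z w) - int K) \<le> real_of_int (gromov_prod2 x z w)"
      by (simp only: of_int_le_iff)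
    then show "min (real_of_int (gromov_prod2 x y w) / 2) (real_of_int (gromov_prod2 y z w) / 2) - real K / 2
        \<le> real_of_int (gromov_prod2 x z w) / 2"
      by (simp add: min_def split: if_splits)
  qed simp
qed

end

section \<open>Bi-Lipschitz geodesic subspaces\<close>

locale bilipschitz_geodesic_subspace =
  sub: nat_geodesic_space V d + amb: nat_geodesic_space W e
  for V :: "'a set" and d and W :: "'a set" and e +
  fixes C :: nat
  assumes subset: "V \<subseteq> W"
    and dist_le: "x \<in> V \<Longrightarrow> y \<in> V \<Longrightarrow> d x y \<le> e x y"
    and lipschitz: "x \<in> V \<Longrightarrow> y \<in> V \<Longrightarrow> e x y \<le> C * d x y"
begin

lemma geodesic_imp_quasi_geodesic:
  assumes \<alpha>: "geodesic V d \<alpha> a b"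
  shows "amb.quasi_geodesic C \<alpha> (d a b)"
  unfolding amb.quasi_geodesic_def amb.coarse_path_def
proof (intro conjI allI impI)
  fix i assume "i \<le> d a b"
  then show "\<alpha> i \<in> W" using sub.geodesic_mem[OF \<alpha>] subset by auto
next
  fix i assume "i < d a b"
  then show "e (\<alpha> i) (\<alpha> (Suc i)) \<le> C"
    using lipschitz[of "\<alpha> i" "\<alpha> (Suc i)"] sub.geodesic_mem[OF \<alpha>] sub.geodesic_dist[OF \<alpha>, of i "Suc i"]
    by simp
next
  fix i j assume "i \<le> j" "j \<le> d a b"
  then show "j - i \<le> e (\<alpha> i) (\<alpha> j)"
    using dist_le sub.geodesic_dist[OF \<alpha>] sub.geodesic_mem[OF \<alpha>] by (metis le_trans)
qed

lemma geodesics_fellow_travel: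
  assumes D: "amb.slim_triangles D"
  obtains M where "\<And>a b \<alpha> \<alpha>'. geodesic V d \<alpha> a b \<Longrightarrow> geodesic W e \<alpha>' a b \<Longrightarrow>
      (\<forall>t\<le>e a b. \<exists>i\<le>d a b. e (\<alpha>' t) (\<alpha> i) \<le> M) \<and>
      (\<forall>i\<le>d a b. \<exists>t\<le>e a b. e (\<alpha> i) (\<alpha>' t) \<le> C * (2 * M + 1) + M)"
proof -
  obtain M where M: "\<And>c n \<sigma> t. amb.quasi_geodesic C c n \<Longrightarrow> geodesic W e \<sigma> (c 0) (c n) \<Longrightarrow>
      t \<le> e (c 0) (c n) \<Longrightarrow> \<exists>i\<le>n. e (\<sigma> t) (c i) \<le> M"
    using amb.slim_triangles_geodesic_near_quasi_geodesic[OF D] by blast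
  show thesis
  proof (rule that)
    fix a b \<alpha> \<alpha>' assume \<alpha>: "geodesic V d \<alpha> a b" and \<alpha>': "geodesic W e \<alpha>' a b"
    have ends: "\<alpha> 0 = a" "\<alpha> (d a b) = b" using sub.geodesic_ends[OF \<alpha>] by auto
    have qg: "amb.quasi_geodesic C \<alpha> (d a b)" using geodesic_imp_quasi_geodesic[OF \<alpha>] .
    have near: "\<forall>t\<le>e a b. \<exists>i\<le>d a b. e (\<alpha>' t) (\<alpha> i) \<le> M" using M[OF qg] \<alpha>' ends by auto
    moreover have "\<forall>i\<le>d a b. \<exists>t\<le>e a b. e (\<alpha> i) (\<alpha>' t) \<le> C * (2 * M + 1) + M"
      using amb.quasi_geodesic_near_geodesic[OF qg] \<alpha>' near ends by auto
    ultimately show "(\<forall>t\<le>e a b. \<exists>i\<le>d a b. e (\<alpha>' t) (\<alpha> i) \<le> M) \<and>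
        (\<forall>i\<le>d a b. \<exists>t\<le>e a b. e (\<alpha> i) (\<alpha>' t) \<le> C * (2 * M + 1) + M)" ..
  qed
qed

text \<open>Compare each side of a geodesic triangle in \<open>V\<close> with the geodesic of \<open>W\<close> between the
  same vertices and use slimness of the triangle in \<open>W\<close>.\<close>
lemma slim_triangles_transfer:
  assumes D: "amb.slim_triangles D"
  shows "\<exists>D'. sub.slim_triangles D'"
proof -
  obtain M where M: "\<And>a b \<alpha> \<alpha>'. geodesic V d \<alpha> a b \<Longrightarrow> geodesic W e \<alpha>' a b \<Longrightarrow>
      (\<forall>t\<le>e a b. \<exists>i\<le>d a b. e (\<alpha>' t) (\<alpha> i) \<le> M) \<and>
      (\<forall>i\<le>d a b. \<exists>t\<le>e a b. e (\<alpha> i) (\<alpha>' t) \<le> C * (2 * M + 1) + M)"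
    using geodesics_fellow_travel[OF D] by blast
  define M' where "M' = C * (2 * M + 1) + M"
  have "sub.slim_triangles (M' + D + M)"
    unfolding sub.slim_triangles_def
  proof (intro ballI allI impI)
    fix a b c \<alpha> \<beta> \<gamma> i
    assume V: "a \<in> V" "b \<in> V" "c \<in> V" and \<alpha>: "geodesic V d \<alpha> a b"
      and \<beta>: "geodesic V d \<beta> a c" and \<gamma>: "geodesic V d \<gamma> c b" and i: "i \<le> d a b"
    have W: "a \<in> W" "b \<in> W" "c \<in> W" using V subset by auto
    obtain \<alpha>' where \<alpha>': "geodesic W e \<alpha>' a b" using amb.geodesic_exists W by blast
    obtain \<beta>' where \<beta>': "geodesic W e \<beta>' a c" using amb.geodesic_exists W by blast
    obtain \<gamma>' where \<gamma>': "geodesic W e \<gamma>' c b" using amb.geodesic_exists W by blast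
    obtain t where t: "t \<le> e a b" "e (\<alpha> i) (\<alpha>' t) \<le> M'"
      using M[OF \<alpha> \<alpha>'] i unfolding M'_def by blast
    have p: "\<alpha> i \<in> V" "\<alpha>' t \<in> W" using sub.geodesic_mem[OF \<alpha> i] amb.geodesic_mem[OF \<alpha>' t(1)] by auto
    have side: "\<exists>s\<le>d x y. d (\<alpha> i) (\<rho> s) \<le> M' + D + M"
      if \<rho>: "geodesic V d \<rho> x y" and \<rho>': "geodesic W e \<rho>' x y"
        and j: "j \<le> e x y" "e (\<alpha>' t) (\<rho>' j) \<le> D" for x y \<rho> \<rho>' j
    proof -
      obtain s where s: "s \<le> d x y" "e (\<rho>' j) (\<rho> s) \<le> M" using M[OF \<rho> \<rho>'] j by blast
      have q: "\<rho>' j \<in> W" "\<rho> s \<in> V"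
        using amb.geodesic_mem[OF \<rho>' j(1)] sub.geodesic_mem[OF \<rho> s(1)] by auto
      have "e (\<alpha> i) (\<rho> s) \<le> e (\<alpha> i) (\<alpha>' t) + e (\<alpha>' t) (\<rho>' j) + e (\<rho>' j) (\<rho> s)"
        using amb.dist_triangle[of "\<alpha> i" "\<alpha>' t" "\<rho> s"] amb.dist_triangle[of "\<alpha>' t" "\<rho>' j" "\<rho> s"]
          p q subset by force
      then have "d (\<alpha> i) (\<rho> s) \<le> M' + D + M" using dist_le[OF p(1) q(2)] t j s by linarith
      then show ?thesis using s by blast
    qed
    show "(\<exists>j\<le>d a c. d (\<alpha> i) (\<beta> j) \<le> M' + D + M) \<or> (\<exists>j\<le>d c b. d (\<alpha> i) (\<gamma> j) \<le> M' + D + M)"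
      using amb.slim_trianglesD[OF D \<alpha>' \<beta>' \<gamma>' W t(1)] side[OF \<beta> \<beta>'] side[OF \<gamma> \<gamma>'] by blast
  qed
  then show ?thesis ..
qed

lemma gromov_hyperbolic_transfer:
  assumes "gromov_hyperbolic_on W (\<lambda>x y. real (e x y))"
  shows "gromov_hyperbolic_on V (\<lambda>x y. real (d x y))"
proof -
  obtain K where "amb.four_point K" using assms amb.gromov_hyperbolic_on_iff_four_point by blast
  then obtain D' where "sub.slim_triangles D'"
    using slim_triangles_transfer amb.four_point_imp_slim_triangles by blast
  then show ?thesis
    using sub.gromov_hyperbolic_on_iff_four_point sub.slim_triangles_imp_four_point by blast
qed

end

section \<open>Word metrics\<close>

definition word_prod :: "('a, 'b) monoid_scheme \<Rightarrow> 'a list \<Rightarrow> 'a" where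
  "word_prod G ws = foldr (\<lambda>x y. x \<otimes>\<^bsub>G\<^esub> y) ws \<one>\<^bsub>G\<^esub>"

definition letters :: "('a, 'b) monoid_scheme \<Rightarrow> 'a set \<Rightarrow> 'a set" where
  "letters G S = S \<union> (\<lambda>s. inv\<^bsub>G\<^esub> s) ` S"

definition word_length :: "('a, 'b) monoid_scheme \<Rightarrow> 'a set \<Rightarrow> 'a \<Rightarrow> nat" where
  "word_length G S g = (LEAST n. \<exists>ws. length ws = n \<and> set ws \<subseteq> letters G S \<and> word_prod G ws = g)"

lemma word_dist_eq_word_length: "word_dist G S g h = word_length G S (inv\<^bsub>G\<^esub> g \<otimes>\<^bsub>G\<^esub> h)"
  by (simp add: word_dist_def word_length_def word_prod_def letters_def)

context group
begin

lemma letters_closed: "S \<subseteq> carrier G \<Longrightarrow> letters G S \<subseteq> carrier G"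
  unfolding letters_def by auto

lemma inv_letters: "S \<subseteq> carrier G \<Longrightarrow> x \<in> letters G S \<Longrightarrow> inv x \<in> letters G S"
  unfolding letters_def by (auto simp: subsetD)

lemma word_prod_Nil [simp]: "word_prod G [] = \<one>"
  by (simp add: word_prod_def)

lemma word_prod_Cons [simp]: "word_prod G (x # ws) = x \<otimes> word_prod G ws"
  by (simp add: word_prod_def)

lemma word_prod_closed: "set ws \<subseteq> carrier G \<Longrightarrow> word_prod G ws \<in> carrier G"
  by (induction ws) auto

lemma word_prod_append:
  "set ws \<subseteq> carrier G \<Longrightarrow> set vs \<subseteq> carrier G \<Longrightarrow> word_prod G (ws @ vs) = word_prod G ws \<otimes> word_prod G vs"
  by (induction ws) (auto simp: m_assoc word_prod_closed)

lemma inv_word_prod: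
  "set ws \<subseteq> carrier G \<Longrightarrow> inv (word_prod G ws) = word_prod G (rev (map (\<lambda>x. inv x) ws))"
proof (induction ws)
  case (Cons x ws)
  then have x: "x \<in> carrier G" and ws: "set ws \<subseteq> carrier G" by auto
  then have "set (rev (map (\<lambda>x. inv x) ws)) \<subseteq> carrier G" by auto
  then show ?case using Cons x ws by (simp add: inv_mult_group word_prod_closed word_prod_append)
qed simp

lemma generate_eq_word_prods:
  assumes "S \<subseteq> carrier G"
  shows "generate G S = {word_prod G ws | ws. set ws \<subseteq> letters G S}"
proof
  show "generate G S \<subseteq> {word_prod G ws | ws. set ws \<subseteq> letters G S}"
  proof
    fix g assume "g \<in> generate G S"
    then show "g \<in> {word_prod G ws | ws. set ws \<subseteq> letters G S}"
    proof (induction rule: generate.induct)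
      case one
      then show ?case by (auto intro!: exI[of _ "[]"])
    next
      case (incl h)
      then show ?case using assms by (auto simp: letters_def intro!: exI[of _ "[h]"])
    next
      case (inv h)
      then show ?case using assms by (auto simp: letters_def intro!: exI[of _ "[inv h]"])
    next
      case (eng h1 h2)
      then obtain w1 w2 where "set w1 \<subseteq> letters G S" "h1 = word_prod G w1"
        "set w2 \<subseteq> letters G S" "h2 = word_prod G w2" by blast
      then show ?case using letters_closed[OF assms]
        by (auto simp: word_prod_append intro!: exI[of _ "w1 @ w2"])
    qed
  qed
next
  have "word_prod G ws \<in> generate G S" if "set ws \<subseteq> letters G S" for ws
    using that by (induction ws) (auto simp: letters_def intro: generate.intros)
  then show "{word_prod G ws | ws. set ws \<subseteq> letters G S} \<subseteq> generate G S" by blast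
qed

lemma word_length_le: "set ws \<subseteq> letters G S \<Longrightarrow> word_length G S (word_prod G ws) \<le> length ws"
  unfolding word_length_def by (rule Least_le) blast

lemma word_length_attained:
  assumes "S \<subseteq> carrier G" "g \<in> generate G S"
  shows "\<exists>ws. length ws = word_length G S g \<and> set ws \<subseteq> letters G S \<and> word_prod G ws = g"
proof -
  have "g \<in> {word_prod G ws | ws. set ws \<subseteq> letters G S}"
    using assms generate_eq_word_prods by simp
  then have "\<exists>n ws. length ws = n \<and> set ws \<subseteq> letters G S \<and> word_prod G ws = g" by blast
  from LeastI_ex[OF this] show ?thesis unfolding word_length_def .
qed

lemma word_length_one: "word_length G S \<one> = 0"
  using word_length_le[of "[]" S] by simp

lemma word_length_letter:
  assumes "S \<subseteq> carrier G" "l \<in> letters G S"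
  shows "word_length G S l \<le> 1"
proof -
  have "l \<in> carrier G" using assms letters_closed by blast
  then show ?thesis using word_length_le[of "[l]" S] assms(2) by simp
qed

lemma word_length_bounded_if_finitely_moved:
  assumes S: "S \<subseteq> carrier G" and moved: "finite {s \<in> S. f s \<noteq> s}"
  shows "\<exists>C. \<forall>s\<in>S. word_length G S (f s) \<le> C"
proof -
  obtain C where C: "\<forall>n \<in> (\<lambda>s. word_length G S (f s)) ` {s \<in> S. f s \<noteq> s}. n \<le> C"
    using moved finite_nat_set_iff_bounded_le by blast
  have "word_length G S (f s) \<le> max 1 C" if "s \<in> S" for s
  proof (cases "f s = s")
    case True
    have "s \<in> letters G S" using that unfolding letters_def by blast
    then have "word_length G S s \<le> 1" by (rule word_length_letter[OF S])
    then show ?thesis using True by simp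
  qed (use C that in auto)
  then show ?thesis by blast
qed

lemma word_length_subgroup:
  assumes "subgroup H G" "T \<subseteq> H"
  shows "word_length (G\<lparr>carrier := H\<rparr>) T = word_length G T"
proof -
  have "(\<lambda>s. inv\<^bsub>G\<lparr>carrier := H\<rparr>\<^esub> s) ` T = (\<lambda>s. inv s) ` T"
    using assms m_inv_consistent by (intro image_cong) blast+
  then have "letters (G\<lparr>carrier := H\<rparr>) T = letters G T" unfolding letters_def by (rule arg_cong)
  then show ?thesis unfolding word_length_def word_prod_def by simp
qed

end

lemma (in group_hom) word_length_image_le:
  assumes S: "S \<subseteq> carrier G" and g: "g \<in> generate G S"
  shows "word_length H (h ` S) (h g) \<le> word_length G S g"
proof -
  obtain ws where ws: "length ws = word_length G S g" "set ws \<subseteq> letters G S" "word_prod G ws = g"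
    using G.word_length_attained[OF S g] by blast
  have hom_prod: "h (word_prod G vs) = word_prod H (map h vs)" if "set vs \<subseteq> carrier G" for vs
    using that by (induction vs) (simp_all add: G.word_prod_closed)
  have "h l \<in> letters H (h ` S)" if "l \<in> letters G S" for l
  proof -
    from that consider "l \<in> S" | s where "s \<in> S" "l = inv\<^bsub>G\<^esub> s" unfolding letters_def by blast
    then show ?thesis
    proof cases
      case (2 s)
      then have "h l = inv\<^bsub>H\<^esub> (h s)" using S by (simp add: subsetD)
      then show ?thesis using 2 unfolding letters_def by blast
    qed (simp add: letters_def)
  qed
  then have "set (map h ws) \<subseteq> letters H (h ` S)" using ws(2) by auto
  then have "word_length H (h ` S) (word_prod H (map h ws)) \<le> length ws"
    using H.word_length_le by fastforce
  then show ?thesis using hom_prod ws G.letters_closed[OF S] by (metis subset_trans)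
qed

locale word_metric = group G for G (structure) +
  fixes S
  assumes gens_closed: "S \<subseteq> carrier G" and generate_eq_carrier: "generate G S = carrier G"
begin

lemma word_length_attained_carrier:
  "g \<in> carrier G \<Longrightarrow> \<exists>ws. length ws = word_length G S g \<and> set ws \<subseteq> letters G S \<and> word_prod G ws = g"
  using word_length_attained[OF gens_closed] generate_eq_carrier by simp

lemma word_length_mult:
  assumes "g \<in> carrier G" "h \<in> carrier G"
  shows "word_length G S (g \<otimes> h) \<le> word_length G S g + word_length G S h"
proof -
  obtain v w where v: "length v = word_length G S g" "set v \<subseteq> letters G S" "word_prod G v = g"
    and w: "length w = word_length G S h" "set w \<subseteq> letters G S" "word_prod G w = h"
    using word_length_attained_carrier assms by meson
  then have "word_prod G (v @ w) = g \<otimes> h"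
    using letters_closed[OF gens_closed] by (subst word_prod_append) auto
  then show ?thesis using word_length_le[of "v @ w" S] v w by auto
qed

lemma word_length_inv:
  assumes "g \<in> carrier G"
  shows "word_length G S (inv g) \<le> word_length G S g"
proof -
  obtain w where w: "length w = word_length G S g" "set w \<subseteq> letters G S" "word_prod G w = g"
    using word_length_attained_carrier assms by blast
  have "set (rev (map (\<lambda>x. inv x) w)) \<subseteq> letters G S" using w inv_letters[OF gens_closed] by auto
  moreover have "word_prod G (rev (map (\<lambda>x. inv x) w)) = inv g"
    using inv_word_prod w letters_closed[OF gens_closed] by auto
  ultimately show ?thesis using word_length_le w by fastforce
qed

lemma word_length_le_mult:
  assumes T: "T \<subseteq> carrier G" and C: "\<forall>t\<in>T. word_length G S t \<le> C" and g: "g \<in> generate G T"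
  shows "word_length G S g \<le> C * word_length G T g"
proof -
  obtain ws where ws: "length ws = word_length G T g" "set ws \<subseteq> letters G T" "word_prod G ws = g"
    using word_length_attained[OF T g] by blast
  have letter: "word_length G S l \<le> C" if "l \<in> letters G T" for l
  proof -
    have "l \<in> T \<or> (\<exists>t\<in>T. l = inv t)" using that unfolding letters_def by blast
    then show ?thesis using C word_length_inv T by (metis le_trans subsetD)
  qed
  have "word_length G S (word_prod G ws) \<le> C * length ws" if "set ws \<subseteq> letters G T" for ws
    using that
  proof (induction ws)
    case (Cons l ws)
    then have "l \<in> carrier G" "word_prod G ws \<in> carrier G"
      using letters_closed[OF T] word_prod_closed by auto
    then have "word_length G S (l \<otimes> word_prod G ws) \<le> word_length G S l + word_length G S (word_prod G ws)"
      by (rule word_length_mult)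
    then show ?case using letter[of l] Cons by simp
  qed (simp add: word_length_one)
  then have "word_length G S (word_prod G ws) \<le> C * length ws" using ws(2) .
  then show ?thesis using ws(1,3) by simp
qed

lemma word_dist_le_length:
  assumes "x \<in> carrier G" "set vs \<subseteq> letters G S" "y = x \<otimes> word_prod G vs"
  shows "word_dist G S x y \<le> length vs"
proof -
  have "word_prod G vs \<in> carrier G" using assms letters_closed[OF gens_closed] word_prod_closed by blast
  then have "inv x \<otimes> y = word_prod G vs" using assms by (simp add: m_assoc[symmetric])
  then show ?thesis unfolding word_dist_eq_word_length using word_length_le[OF assms(2)] by simp
qed

lemma word_dist_self: "word_dist G S x x = 0" if "x \<in> carrier G"
  using that by (simp add: word_dist_eq_word_length word_length_one)

lemma word_dist_commute:
  assumes "x \<in> carrier G" "y \<in> carrier G"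
  shows "word_dist G S x y = word_dist G S y x"
  using word_length_inv[of "inv y \<otimes> x"] word_length_inv[of "inv x \<otimes> y"] assms
  by (simp add: word_dist_eq_word_length inv_mult_group)

lemma word_dist_triangle:
  assumes "x \<in> carrier G" "y \<in> carrier G" "z \<in> carrier G"
  shows "word_dist G S x z \<le> word_dist G S x y + word_dist G S y z"
proof -
  have "inv x \<otimes> z = (inv x \<otimes> y) \<otimes> (inv y \<otimes> z)"
    using assms by (simp add: m_assoc[symmetric] r_inv) (simp add: m_assoc)
  then show ?thesis
    using word_length_mult[of "inv x \<otimes> y" "inv y \<otimes> z"] assms by (simp add: word_dist_eq_word_length)
qed

text \<open>The prefixes of a shortest word for \<open>inv x \<otimes> y\<close> trace a geodesic from \<open>x\<close> to \<open>y\<close>.\<close>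
lemma word_dist_geodesic_exists:
  assumes x: "x \<in> carrier G" and y: "y \<in> carrier G"
  shows "\<exists>\<gamma>. geodesic (carrier G) (word_dist G S) \<gamma> x y"
proof -
  let ?d = "word_dist G S"
  obtain ws where ws: "length ws = ?d x y" "set ws \<subseteq> letters G S" "word_prod G ws = inv x \<otimes> y"
    using word_length_attained_carrier[of "inv x \<otimes> y"] x y by (auto simp: word_dist_eq_word_length)
  define \<gamma> where "\<gamma> i = x \<otimes> word_prod G (take i ws)" for i
  have sub: "set (take j (drop i ws)) \<subseteq> letters G S" "set (take i ws) \<subseteq> letters G S" for i j
    using ws(2) by (meson order.trans set_take_subset set_drop_subset)+
  have carrier: "set (take j (drop i ws)) \<subseteq> carrier G" "set (take i ws) \<subseteq> carrier G" for i j
    using sub letters_closed[OF gens_closed] by blast+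
  have \<gamma>_closed: "\<gamma> i \<in> carrier G" for i unfolding \<gamma>_def using x carrier word_prod_closed by auto
  have \<gamma>_step: "\<gamma> j = \<gamma> i \<otimes> word_prod G (take (j - i) (drop i ws))" if "i \<le> j" for i j
  proof -
    have "take j ws = take i ws @ take (j - i) (drop i ws)"
      using that by (metis le_add_diff_inverse take_add)
    then show ?thesis unfolding \<gamma>_def using carrier x by (simp add: word_prod_append m_assoc word_prod_closed)
  qed
  have \<gamma>_ends: "\<gamma> 0 = x" "\<gamma> (?d x y) = y" unfolding \<gamma>_def using x y ws by (simp_all add: m_assoc[symmetric])
  have upper: "?d (\<gamma> i) (\<gamma> j) \<le> j - i" if "i \<le> j" for i j
    using word_dist_le_length[OF \<gamma>_closed sub(1) \<gamma>_step[OF that]] by simp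
  show ?thesis
    unfolding geodesic_def
  proof (intro exI[of _ \<gamma>] conjI allI impI)
    fix i j assume ij: "i \<le> j" "j \<le> ?d x y"
    have "?d x y \<le> ?d x (\<gamma> i) + ?d (\<gamma> i) (\<gamma> j) + ?d (\<gamma> j) y"
      using word_dist_triangle[OF x \<gamma>_closed[of i] y] word_dist_triangle[OF \<gamma>_closed[of i] \<gamma>_closed[of j] y]
      by linarith
    then show "?d (\<gamma> i) (\<gamma> j) = j - i"
      using upper[of 0 i] upper[OF ij(1)] upper[of j "?d x y"] \<gamma>_ends ij by fastforce
  qed (use \<gamma>_ends \<gamma>_closed in auto)
qed

lemma nat_geodesic_space_word_dist: "nat_geodesic_space (carrier G) (word_dist G S)"
  by unfold_locales (simp_all add: word_dist_self word_dist_commute word_dist_triangle word_dist_geodesic_exists)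

end

section \<open>Retracts\<close>

lemma retract_generate_image:
  assumes G: "group G" and R: "subgroup R G" and r: "r \<in> hom G (G\<lparr>carrier := R\<rparr>)"
    and r_id: "\<forall>x\<in>R. r x = x" and S: "S \<subseteq> carrier G" "generate G S = carrier G"
  shows "generate (G\<lparr>carrier := R\<rparr>) (r ` S) = R"
proof -
  interpret r: group_hom G "G\<lparr>carrier := R\<rparr>" r
    using G R r by (simp add: group_hom_def group_hom_axioms_def group.subgroup_imp_group)
  have "r ` carrier G = R" using R r_id r.hom_closed subgroup.subset by force
  then show ?thesis using r.generate_img[OF S(1)] S(2) by simp
qed

lemma retract_word_dist_bilipschitz:
  assumes G: "group G" and R: "subgroup R G" and r: "r \<in> hom G (G\<lparr>carrier := R\<rparr>)"
    and r_id: "\<forall>x\<in>R. r x = x" and S: "S \<subseteq> carrier G" "generate G S = carrier G"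
    and C: "\<forall>s\<in>S. word_length G S (r s) \<le> C"
  shows "bilipschitz_geodesic_subspace R (word_dist (G\<lparr>carrier := R\<rparr>) (r ` S))
    (carrier G) (word_dist G S) C"
proof -
  interpret G: group G by fact
  interpret r: group_hom G "G\<lparr>carrier := R\<rparr>" r
    using G R r by (simp add: group_hom_def group_hom_axioms_def G.subgroup_imp_group)
  have RG: "R \<subseteq> carrier G" using R subgroup.subset by blast
  have rS: "r ` S \<subseteq> R" using S(1) r.hom_closed by auto
  have gen_R: "generate (G\<lparr>carrier := R\<rparr>) (r ` S) = R"
    using retract_generate_image[OF G R r r_id S] .
  interpret GS: word_metric G S by unfold_locales (use S in auto)
  interpret GR: word_metric "G\<lparr>carrier := R\<rparr>" "r ` S" by unfold_locales (use rS gen_R in auto)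
  have dist_R: "word_dist (G\<lparr>carrier := R\<rparr>) (r ` S) x y = word_length G (r ` S) (inv\<^bsub>G\<^esub> x \<otimes>\<^bsub>G\<^esub> y)"
    if "x \<in> R" "y \<in> R" for x y
    using that R rS by (simp add: word_dist_eq_word_length G.word_length_subgroup)
  have g: "inv\<^bsub>G\<^esub> x \<otimes>\<^bsub>G\<^esub> y \<in> R" if "x \<in> R" "y \<in> R" for x y
    using that R by (simp add: subgroup.m_closed subgroup.m_inv_closed)
  have dist_le: "word_dist (G\<lparr>carrier := R\<rparr>) (r ` S) x y \<le> word_dist G S x y"
    if xy: "x \<in> R" "y \<in> R" for x y
  proof -
    have "word_length (G\<lparr>carrier := R\<rparr>) (r ` S) (r (inv\<^bsub>G\<^esub> x \<otimes>\<^bsub>G\<^esub> y))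
        \<le> word_length G S (inv\<^bsub>G\<^esub> x \<otimes>\<^bsub>G\<^esub> y)"
      using r.word_length_image_le[OF S(1)] S(2) g[OF xy] RG by auto
    then show ?thesis
      using dist_R[OF xy] g[OF xy] r_id R rS by (simp add: G.word_length_subgroup word_dist_eq_word_length)
  qed
  have lipschitz: "word_dist G S x y \<le> C * word_dist (G\<lparr>carrier := R\<rparr>) (r ` S) x y"
    if xy: "x \<in> R" "y \<in> R" for x y
  proof -
    have "inv\<^bsub>G\<^esub> x \<otimes>\<^bsub>G\<^esub> y \<in> generate G (r ` S)"
      using g[OF xy] gen_R G.generate_consistent[OF rS R] by simp
    then have "word_length G S (inv\<^bsub>G\<^esub> x \<otimes>\<^bsub>G\<^esub> y) \<le> C * word_length G (r ` S) (inv\<^bsub>G\<^esub> x \<otimes>\<^bsub>G\<^esub> y)"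
      using GS.word_length_le_mult rS RG C by blast
    then show ?thesis using dist_R[OF xy] by (simp add: word_dist_eq_word_length)
  qed
  show ?thesis
    unfolding bilipschitz_geodesic_subspace_def bilipschitz_geodesic_subspace_axioms_def
    using GS.nat_geodesic_space_word_dist GR.nat_geodesic_space_word_dist RG dist_le lipschitz by simp
qed

lemma retract_gromov_hyperbolic:
  assumes G: "group G" and R: "subgroup R G" and r: "r \<in> hom G (G\<lparr>carrier := R\<rparr>)"
    and r_id: "\<forall>x\<in>R. r x = x" and S: "S \<subseteq> carrier G" "generate G S = carrier G"
    and moved: "finite {s \<in> S. r s \<noteq> s}"
    and hyp: "gromov_hyperbolic_on (carrier G) (\<lambda>x y. real (word_dist G S x y))"
  shows "gromov_hyperbolic_on R (\<lambda>x y. real (word_dist (G\<lparr>carrier := R\<rparr>) (r ` S) x y))"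
proof -
  obtain C where "\<forall>s\<in>S. word_length G S (r s) \<le> C"
    using group.word_length_bounded_if_finitely_moved[OF G S(1) moved] by blast
  then interpret bilipschitz_geodesic_subspace R "word_dist (G\<lparr>carrier := R\<rparr>) (r ` S)"
      "carrier G" "word_dist G S" C
    using retract_word_dist_bilipschitz[OF G R r r_id S] by blast
  show ?thesis using gromov_hyperbolic_transfer[OF hyp] .
qed

theorem lemma3p3:
  fixes G :: "('a, 'b) monoid_scheme" and R :: "'a set" and As :: "'a set list"
  assumes "group G"
    and "retract R G"
    and "weakly_rel_hyperbolic G As"
    and "\<forall>A\<in>set As. A \<subseteq> R"
  shows "weakly_rel_hyperbolic (G\<lparr>carrier := R\<rparr>) As"
proof -
  interpret G: group G by fact
  obtain r where R: "subgroup R G" and r: "r \<in> hom G (G\<lparr>carrier := R\<rparr>)" "\<forall>x\<in>R. r x = x"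
    using assms(2) unfolding retract_def by blast
  define U where "U = \<Union>(set As)"
  obtain S0 where S0: "finite S0" "S0 \<subseteq> carrier G" and gen: "generate G (S0 \<union> U) = carrier G"
    and hyp: "gromov_hyperbolic_on (carrier G) (\<lambda>x y. real (word_dist G (S0 \<union> U) x y))"
    using assms(3) unfolding weakly_rel_hyperbolic_def U_def by blast
  have U: "U \<subseteq> R" "U \<subseteq> carrier G" using assms(4) R subgroup.subset unfolding U_def by blast+
  then have S: "S0 \<union> U \<subseteq> carrier G" and rS: "r ` (S0 \<union> U) = r ` S0 \<union> U" using S0(2) r(2) by force+
  have "finite {s \<in> S0 \<union> U. r s \<noteq> s}"
    using S0(1) by (rule finite_subset[rotated]) (use U r(2) in auto)
  then have "gromov_hyperbolic_on R (\<lambda>x y. real (word_dist (G\<lparr>carrier := R\<rparr>) (r ` S0 \<union> U) x y))"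
    unfolding rS[symmetric] by (rule retract_gromov_hyperbolic[OF assms(1) R r S gen _ hyp])
  moreover have "generate (G\<lparr>carrier := R\<rparr>) (r ` S0 \<union> U) = R"
    using retract_generate_image[OF assms(1) R r S gen] unfolding rS .
  moreover have "r ` S0 \<subseteq> R" using r(1) S0(2) unfolding hom_def by auto
  moreover have "subgroup A (G\<lparr>carrier := R\<rparr>)" if "A \<in> set As" for A
  proof -
    have "subgroup A G" using that assms(3) unfolding weakly_rel_hyperbolic_def by blast
    then show ?thesis using that assms(4) R G.subgroup_incl by blast
  qed
  ultimately show ?thesis
    unfolding weakly_rel_hyperbolic_def U_def[symmetric] using S0(1)
    by (intro conjI ballI exI[of _ "r ` S0"]) simp_all
qed

end
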